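(* In the algebra $(\mathbb Z,+,\mathbb Z)$, for all $a,b,c,d,e,f,g,h\in\mathbb Z$: if $a:b::_m c:d$ and $e:f::_m g:h$, then $a+e:b+f::_m c+g:d+h$.
   Context: $(\mathbb Z,+,\mathbb Z)$ is the algebra with universe $\mathbb Z$, addition, and every integer as a constant. A justification is a pair of terms $s\to t$ with the variables of $t$ among those of $s$; monolinear justifications are those where $s,t$ contain only one fixed variable $x$, occurring at most once in $s$ and at most once in $t$. $\uparrow^m(a\to b)$ is the set of monolinear justifications $s\to t$ with $a=s(\mathbf o)$, $b=t(\mathbf o)$ for some value $\mathbf o$; $\uparrow^m(a\to b:\!\cdot\,c\to d):=\uparrow^m(a\to b)\cap\uparrow^m(c\to d)$. A monolinear justification is trivial if it lies in all sets $\uparrow^m(a'\to b':\!\cdot\,c'\to d')$. $a\to b:\!\cdot_m\,c\to d$ holds iff either (i) all justifications in $\uparrow^m(a\to b)\cup\uparrow^m(c\to d)$ are trivial, or (ii) $J_d:=\uparrow^m(a\to b:\!\cdot\,c\to d)$ contains a non-trivial justification and for every $d'$, $J_d\subseteq J_{d'}$ implies $J_{d'}$ contains a non-trivial justification and $J_{d'}\subseteq J_d$ (ignoring trivial justifications). $a:b::_m c:d$ iff $a\to b:\!\cdot_m\,c\to d$, $b\to a:\!\cdot_m\,d\to c$, $c\to d:\!\cdot_m\,a\to b$, $d\to c:\!\cdot_m\,b\to a$ all hold. *)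

theory Defs
  imports Main
begin

text \<open>Terms of the algebra (Z, +, Z): variables, integer constants (every integer is a
constant symbol), and binary addition.\<close>
datatype trm = Var nat | Cst int | Add trm trm

fun tvars :: "trm \<Rightarrow> nat set" where
  "tvars (Var n) = {n}"
| "tvars (Cst k) = {}"
| "tvars (Add s t) = tvars s \<union> tvars t"

fun occ :: "nat \<Rightarrow> trm \<Rightarrow> nat" where
  "occ n (Var m) = (if m = n then 1 else 0)"
| "occ n (Cst k) = 0"
| "occ n (Add s t) = occ n s + occ n t"

fun teval :: "(nat \<Rightarrow> int) \<Rightarrow> trm \<Rightarrow> int" where
  "teval \<sigma> (Var n) = \<sigma> n"
| "teval \<sigma> (Cst k) = k"
| "teval \<sigma> (Add s t) = teval \<sigma> s + teval \<sigma> t"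

definition xvar :: nat where "xvar = 0"

definition justification :: "trm \<times> trm \<Rightarrow> bool" where
  "justification j \<longleftrightarrow> tvars (snd j) \<subseteq> tvars (fst j)"

definition monolinear :: "trm \<times> trm \<Rightarrow> bool" where
  "monolinear j \<longleftrightarrow> justification j
     \<and> tvars (fst j) \<subseteq> {xvar} \<and> tvars (snd j) \<subseteq> {xvar}
     \<and> occ xvar (fst j) \<le> 1 \<and> occ xvar (snd j) \<le> 1"

definition ev1 :: "trm \<Rightarrow> int \<Rightarrow> int" where
  "ev1 s v = teval (\<lambda>_. v) s"

definition up :: "int \<Rightarrow> int \<Rightarrow> (trm \<times> trm) set" where
  "up a b = {j. monolinear j \<and> (\<exists>v. ev1 (fst j) v = a \<and> ev1 (snd j) v = b)}"

definition up2 :: "int \<Rightarrow> int \<Rightarrow> int \<Rightarrow> int \<Rightarrow> (trm \<times> trm) set" where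
  "up2 a b c d = up a b \<inter> up c d"

definition trivial :: "trm \<times> trm \<Rightarrow> bool" where
  "trivial j \<longleftrightarrow> monolinear j \<and> (\<forall>a' b' c' d'. j \<in> up2 a' b' c' d')"

definition ntJ :: "int \<Rightarrow> int \<Rightarrow> int \<Rightarrow> int \<Rightarrow> (trm \<times> trm) set" where
  "ntJ a b c d = {j \<in> up2 a b c d. \<not> trivial j}"

definition arrow_prop :: "int \<Rightarrow> int \<Rightarrow> int \<Rightarrow> int \<Rightarrow> bool" where
  "arrow_prop a b c d \<longleftrightarrow>
     (\<forall>j \<in> up a b \<union> up c d. trivial j)
   \<or> (ntJ a b c d \<noteq> {} \<and>
      (\<forall>d'. ntJ a b c d \<subseteq> ntJ a b c d' \<longrightarrow>
             ntJ a b c d' \<noteq> {} \<and> ntJ a b c d' \<subseteq> ntJ a b c d))"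

definition prop_m :: "int \<Rightarrow> int \<Rightarrow> int \<Rightarrow> int \<Rightarrow> bool" where
  "prop_m a b c d \<longleftrightarrow> arrow_prop a b c d \<and> arrow_prop b a d c
     \<and> arrow_prop c d a b \<and> arrow_prop d c b a"

end

theory Submission
  imports Defs
begin

text \<open>A monolinear justification s \<rightarrow> t evaluates to a pair of affine maps with slopes in
{0, 1}, and since x occurs in t only if it occurs in s, the target is either constant or
differs from the source by a constant. Hence a justification lies in both up a b and up c d
only if b = d or b - a = d - c. In particular no justification is trivial (it would lie in
up 0 0 and up 0 1), and a \<rightarrow> b :\<cdot>_m c \<rightarrow> d holds exactly when b = d or b - a = d - c,
witnessed by x \<rightarrow> b or x \<rightarrow> x + (b - a). The four conditions of a : b ::_m c : d thus
amount to a - b = c - d, which is preserved by componentwise addition.\<close>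

lemma occ_eq_0_iff: "occ n s = 0 \<longleftrightarrow> n \<notin> tvars s"
  by (induction s) auto

lemma ev1_diff:
  assumes "tvars s \<subseteq> {xvar}"
  shows "ev1 s v - ev1 s w = int (occ xvar s) * (v - w)"
  using assms unfolding ev1_def by (induction s) (auto simp: algebra_simps)

lemma monolinear_const_or_shift:
  assumes "monolinear (s, t)"
  obtains "\<And>v w. ev1 t v = ev1 t w"
  | "\<And>v w. ev1 t v - ev1 s v = ev1 t w - ev1 s w"
proof -
  have vars: "tvars s \<subseteq> {xvar}" "tvars t \<subseteq> {xvar}" "tvars t \<subseteq> tvars s"
    and occs: "occ xvar s \<le> 1" "occ xvar t \<le> 1"
    using assms by (auto simp: monolinear_def justification_def)
  note slopes = ev1_diff[OF vars(1)] ev1_diff[OF vars(2)]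
  show thesis
  proof (cases "occ xvar t = 0")
    case True
    have "ev1 t v = ev1 t w" for v w
      using slopes(2)[of v w] True by simp
    then show thesis by (rule that(1))
  next
    case False
    then have "occ xvar t = 1" using occs by simp
    moreover have "occ xvar s \<noteq> 0"
      using False vars(3) by (auto simp: occ_eq_0_iff)
    then have "occ xvar s = 1" using occs(1) by simp
    ultimately have "ev1 t v - ev1 s v = ev1 t w - ev1 s w" for v w
      using slopes(1)[of v w] slopes(2)[of v w] by simp
    then show thesis by (rule that(2))
  qed
qed

lemma up_common_justification:
  assumes "j \<in> up a b" "j \<in> up c d"
  shows "b = d \<or> b - a = d - c"
proof -
  obtain s t where j: "j = (s, t)" by (cases j)
  obtain v where v: "ev1 s v = a" "ev1 t v = b" using assms(1) by (auto simp: up_def j)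
  obtain w where w: "ev1 s w = c" "ev1 t w = d" using assms(2) by (auto simp: up_def j)
  have "monolinear (s, t)" using assms(1) by (simp add: up_def j)
  then show ?thesis
  proof (rule monolinear_const_or_shift)
    assume "\<And>v w. ev1 t v = ev1 t w"
    then show ?thesis using v(2) w(2) by blast
  next
    assume "\<And>v w. ev1 t v - ev1 s v = ev1 t w - ev1 s w"
    then show ?thesis using v w by blast
  qed
qed

lemma not_trivial: "\<not> trivial j"
proof
  assume "trivial j"
  then have "j \<in> up 0 0" "j \<in> up 0 1" by (auto simp: trivial_def up2_def)
  then show False using up_common_justification by fastforce
qed

lemma ntJ_eq_up2: "ntJ a b c d = up2 a b c d"
  by (simp add: ntJ_def not_trivial)

lemma const_justification_in_up: "(Var xvar, Cst b) \<in> up a b"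
  by (auto simp: up_def monolinear_def justification_def ev1_def)

lemma shift_justification_in_up:
  assumes "b - a = k"
  shows "(Var xvar, Add (Var xvar) (Cst k)) \<in> up a b"
  using assms by (auto simp: up_def monolinear_def justification_def ev1_def)

lemma arrow_prop_iff: "arrow_prop a b c d \<longleftrightarrow> b = d \<or> b - a = d - c"
proof
  assume "arrow_prop a b c d"
  moreover have "(Var xvar, Cst b) \<in> up a b"
    by (rule const_justification_in_up)
  ultimately have "up2 a b c d \<noteq> {}"
    by (auto simp: arrow_prop_def ntJ_eq_up2 not_trivial)
  then show "b = d \<or> b - a = d - c"
    by (auto simp: up2_def dest: up_common_justification)
next
  assume H: "b = d \<or> b - a = d - c"
  define j where
    "j = (if b = d then (Var xvar, Cst b) else (Var xvar, Add (Var xvar) (Cst (b - a))))"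
  have jab: "j \<in> up a b" and jcd: "j \<in> up c d"
    using H by (auto simp: j_def const_justification_in_up shift_justification_in_up)
  have "d' = d" if "j \<in> up c d'" for d'
    using up_common_justification[OF jcd that] up_common_justification[OF jab that] H by auto
  then show "arrow_prop a b c d"
    unfolding arrow_prop_def ntJ_eq_up2 up2_def using jab jcd by blast
qed

lemma prop_m_iff: "prop_m a b c d \<longleftrightarrow> a - b = c - d"
  unfolding prop_m_def arrow_prop_iff by auto

theorem mainTheorem6:
  fixes a b c d e f g h :: int
  assumes "prop_m a b c d" and "prop_m e f g h"
  shows "prop_m (a + e) (b + f) (c + g) (d + h)"
  using assms unfolding prop_m_iff by simp

end
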